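(* Let $\mathcal{H}$ be a real Hilbert space, let $A,B:\mathcal{H}\rightrightarrows\mathcal{H}$ be maximally monotone operators, let $\gamma>0$, and let $(\lambda_n)_{n=0}^\infty$ be a sequence in $[0,1]$ such that $\sum_{n\geq 0}\lambda_n(1-\lambda_n)=+\infty$. Let $\beta\in{]0,1[}$ and suppose that $q\in\operatorname{ran}\left(\operatorname{Id}+\frac{\gamma}{2(1-\beta)}(A+B)\right)$. Given any $x_0\in\mathcal{H}$, define for $n=0,1,2,\ldots$ \[ x_{n+1}=(1-\lambda_n)x_n+\lambda_n\left(2\beta J_{(\gamma B_{-q})}-\operatorname{Id}\right)\left(2\beta J_{(\gamma A_{-q})}-\operatorname{Id}\right)(x_n). \] Then there exists $x^\star\in\operatorname{Fix}\left((2\beta J_{(\gamma B_{-q})}-\operatorname{Id})(2\beta J_{(\gamma A_{-q})}-\operatorname{Id})\right)$ such that: (i) $(x_{n+1}-x_n)_{n=0}^\infty$ converges strongly to $0$; (ii) $(x_n)_{n=0}^\infty$ converges weakly to $x^\star$, and $J_{\gamma A}(q+x^\star)=J_{\frac{\gamma}{2(1-\beta)}(A+B)}(q)$; (iii) $\left(J_{\gamma A}(q+x_n)\right)_{n=0}^\infty$ converges strongly to $J_{\frac{\gamma}{2(1-\beta)}(A+B)}(q)$.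
   Context: For an operator $T:\mathcal{H}\rightrightarrows\mathcal{H}$, the resolvent is $J_T:=(\operatorname{Id}+T)^{-1}$, i.e. $J_T(x)=\{y: x\in y+T(y)\}$; for maximally monotone $T$ it is single-valued with full domain. For $w\in\mathcal{H}$, the inner $w$-perturbation of $T$ is $T_w(x):=T(x-w)$; thus $\gamma A_{-q}$ denotes the operator $x\mapsto\gamma A(x+q)$. $\operatorname{Fix}S=\{x: x=S(x)\}$ and $\operatorname{ran}$ denotes the range. *)

theory Defs
  imports "HOL-Analysis.Analysis"
begin

text \<open>Set-valued operators on a real inner product space are modelled as functions
  into sets. Real Hilbert space = class real_inner + complete_space.\<close>

definition mono_op :: "('a::real_inner \<Rightarrow> 'a set) \<Rightarrow> bool" where
  "mono_op T \<longleftrightarrow> (\<forall>x y u v. u \<in> T x \<longrightarrow> v \<in> T y \<longrightarrow> inner (x - y) (u - v) \<ge> 0)"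

definition max_mono_op :: "('a::real_inner \<Rightarrow> 'a set) \<Rightarrow> bool" where
  "max_mono_op T \<longleftrightarrow> mono_op T \<and>
     (\<forall>S. mono_op S \<and> (\<forall>x. T x \<subseteq> S x) \<longrightarrow> S = T)"

definition op_add :: "('a::real_vector \<Rightarrow> 'a set) \<Rightarrow> ('a \<Rightarrow> 'a set) \<Rightarrow> ('a \<Rightarrow> 'a set)" where
  "op_add A B = (\<lambda>x. {a + b | a b. a \<in> A x \<and> b \<in> B x})"

definition op_scale :: "real \<Rightarrow> ('a::real_vector \<Rightarrow> 'a set) \<Rightarrow> ('a \<Rightarrow> 'a set)" where
  "op_scale c T = (\<lambda>x. (\<lambda>v. c *\<^sub>R v) ` T x)"

definition op_perturb :: "('a::real_vector \<Rightarrow> 'a set) \<Rightarrow> 'a \<Rightarrow> ('a \<Rightarrow> 'a set)" where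
  "op_perturb T w = (\<lambda>x. T (x - w))"

definition ran_id_plus :: "('a::real_vector \<Rightarrow> 'a set) \<Rightarrow> 'a set" where
  "ran_id_plus T = {x + v | x v. v \<in> T x}"

text \<open>Resolvent J_T(x) = (Id+T)^{-1}(x), as a point (the unique y with x \<in> y + T y,
  which exists and is unique in all uses below).\<close>
definition resolvent :: "('a::real_vector \<Rightarrow> 'a set) \<Rightarrow> 'a \<Rightarrow> 'a" where
  "resolvent T x = (THE y. x - y \<in> T y)"

definition weak_conv :: "(nat \<Rightarrow> 'a::real_inner) \<Rightarrow> 'a \<Rightarrow> bool" where
  "weak_conv x l \<longleftrightarrow> (\<forall>y. (\<lambda>n. inner (x n) y) \<longlonglongrightarrow> inner l y)"

end

theory Submission
  imports Defs
begin

text \<open>Minty's theorem is obtained variationally: on the epigraph of the Fitzpatrick function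
  of a maximally monotone operator \<open>A\<close>, the energy \<open>r + \<parallel>(x, u)\<parallel>\<^sup>2 / 2\<close> is strongly convex in
  \<open>(x, u)\<close> and attains its minimum, and the first-order condition at the minimiser shows that
  \<open>(-u, -x)\<close> lies in the graph of \<open>A\<close> and that \<open>x = -u\<close>.  Hence resolvents are everywhere defined
  and firmly nonexpansive, and \<open>T = (2\<beta>J\<^sub>B - Id) \<circ> (2\<beta>J\<^sub>A - Id)\<close> satisfies
  \<open>\<parallel>T a - T b\<parallel>\<^sup>2 \<le> \<parallel>a - b\<parallel>\<^sup>2 - 4\<beta>(1 - \<beta>) \<parallel>J\<^sub>A a - J\<^sub>A b\<parallel>\<^sup>2\<close>.  A solution of the inclusion
  defining \<open>J\<^bsub>\<gamma>/(2(1-\<beta>))(A+B)\<^esub> q\<close> yields a fixed point of \<open>T\<close>, and by this inequality \<open>J\<^sub>A\<close> is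
  constant on the fixed points.  The Krasnosel'skii--Mann iterates are Fejer monotone, and the
  divergence of \<open>\<Sum> \<lambda>\<^sub>n(1 - \<lambda>\<^sub>n)\<close> forces their decreasing residuals \<open>\<parallel>x\<^sub>n - T x\<^sub>n\<parallel>\<close> to zero.
  Weak convergence then follows from Opial's lemma, proved here with asymptotic centres instead of
  weak compactness, and the strong convergence of \<open>J\<^sub>A x\<^sub>n\<close> from the margin in the inequality.\<close>

section \<open>Estimates in inner product spaces\<close>

lemma norm_convex_comb_sq:
  fixes a b :: "'a::real_inner"
  shows "(norm ((1 - t) *\<^sub>R a + t *\<^sub>R b))\<^sup>2
    = (1 - t) * (norm a)\<^sup>2 + t * (norm b)\<^sup>2 - t * (1 - t) * (norm (a - b))\<^sup>2"
  unfolding power2_norm_eq_inner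
  by (simp add: inner_diff_left inner_diff_right inner_add_left inner_add_right
      inner_commute algebra_simps)

lemma Cauchy_if_dist_sq_le:
  fixes Z :: "nat \<Rightarrow> 'a::metric_space"
  assumes e: "e \<longlonglongrightarrow> 0" and dist: "\<And>k j. (dist (Z k) (Z j))\<^sup>2 \<le> e k + e j"
  shows "Cauchy Z"
proof (rule metric_CauchyI)
  fix \<epsilon> :: real assume "0 < \<epsilon>"
  then have "0 < \<epsilon>\<^sup>2 / 2" by simp
  with e obtain N where N: "\<And>k. k \<ge> N \<Longrightarrow> e k < \<epsilon>\<^sup>2 / 2"
    by (metis (no_types, lifting) eventually_sequentially order_tendstoD(2))
  have "dist (Z k) (Z j) < \<epsilon>" if "k \<ge> N" "j \<ge> N" for k j
  proof -
    have "(dist (Z k) (Z j))\<^sup>2 < \<epsilon>\<^sup>2" using dist[of k j] N[OF that(1)] N[OF that(2)] by linarith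
    then show ?thesis using \<open>0 < \<epsilon>\<close> by (simp add: power_less_imp_less_base)
  qed
  then show "\<exists>M. \<forall>k\<ge>M. \<forall>j\<ge>M. dist (Z k) (Z j) < \<epsilon>" by blast
qed

lemma minimizing_seq_exists:
  fixes f :: "'b \<Rightarrow> real"
  assumes "S \<noteq> {}" and bdd: "bdd_below (f ` S)"
  obtains Z where "\<And>k. Z k \<in> S" and "\<And>k. f (Z k) < Inf (f ` S) + inverse (real (Suc k))"
    and "(\<lambda>k. f (Z k)) \<longlonglongrightarrow> Inf (f ` S)"
proof -
  have "\<exists>z\<in>S. f z < Inf (f ` S) + inverse (real (Suc k))" for k
    using cInf_lessD[of "f ` S" "Inf (f ` S) + inverse (real (Suc k))"] assms(1) by auto
  then obtain Z where Z: "\<And>k. Z k \<in> S" "\<And>k. f (Z k) < Inf (f ` S) + inverse (real (Suc k))"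
    by metis
  moreover have "(\<lambda>k. f (Z k)) \<longlonglongrightarrow> Inf (f ` S)"
  proof (rule tendsto_sandwich)
    show "\<forall>\<^sub>F k in sequentially. Inf (f ` S) \<le> f (Z k)"
      using Z(1) bdd by (simp add: cINF_lower)
    show "\<forall>\<^sub>F k in sequentially. f (Z k) \<le> Inf (f ` S) + inverse (real (Suc k))"
      using Z(2) by (simp add: less_imp_le)
    show "(\<lambda>k. Inf (f ` S) + inverse (real (Suc k))) \<longlonglongrightarrow> Inf (f ` S)"
      using tendsto_add[OF tendsto_const LIMSEQ_inverse_real_of_nat] by simp
  qed simp
  ultimately show thesis by (rule that)
qed

lemma power2_norm_diff_le:
  fixes a b :: "'a::real_normed_vector"
  shows "(norm a)\<^sup>2 - (norm b)\<^sup>2 \<le> norm (a - b) * (norm a + norm b)"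
proof -
  have "(norm a)\<^sup>2 - (norm b)\<^sup>2 = (norm a - norm b) * (norm a + norm b)"
    by (simp add: power2_eq_square algebra_simps)
  also have "\<dots> \<le> norm (a - b) * (norm a + norm b)"
    by (rule mult_right_mono) (simp_all add: norm_triangle_ineq2)
  finally show ?thesis .
qed

section \<open>Maximal monotonicity\<close>

definition mono_related :: "('a::real_inner \<Rightarrow> 'a set) \<Rightarrow> 'a \<Rightarrow> 'a \<Rightarrow> bool" where
  "mono_related A x u \<longleftrightarrow> (\<forall>y v. v \<in> A y \<longrightarrow> 0 \<le> inner (x - y) (u - v))"

lemma inner_diff_swap: "inner (a - b) (c - d) = inner (b - a) (d - c)"
  for a b c d :: "'a::real_inner"
  by (simp add: inner_diff_left inner_diff_right)

lemma max_mono_op_iff: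
  "max_mono_op A \<longleftrightarrow> mono_op A \<and> (\<forall>x u. mono_related A x u \<longrightarrow> u \<in> A x)"
proof
  assume max: "max_mono_op A"
  then have mono: "mono_op A" by (simp add: max_mono_op_def)
  moreover have "u \<in> A x" if rel: "mono_related A x u" for x u
  proof -
    define S where "S z = (if z = x then insert u (A z) else A z)" for z
    have graph_S: "c \<in> S a \<longleftrightarrow> c \<in> A a \<or> (a = x \<and> c = u)" for a c
      by (auto simp: S_def)
    have "mono_op S"
      unfolding mono_op_def
    proof (intro allI impI)
      fix a b c d assume "c \<in> S a" "d \<in> S b"
      then consider "c \<in> A a" "d \<in> A b" | "c \<in> A a" "b = x" "d = u"
        | "a = x" "c = u" "d \<in> A b" | "a = x" "c = u" "b = x" "d = u"
        unfolding graph_S by blast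
      then show "0 \<le> inner (a - b) (c - d)"
        by cases (use mono rel in \<open>auto simp: mono_op_def mono_related_def inner_diff_swap[of a]\<close>)
    qed
    moreover have "\<forall>z. A z \<subseteq> S z" by (auto simp: S_def)
    ultimately have "S = A" using max by (simp add: max_mono_op_def)
    then show "u \<in> A x" by (metis S_def insertI1)
  qed
  ultimately show "mono_op A \<and> (\<forall>x u. mono_related A x u \<longrightarrow> u \<in> A x)" by blast
next
  assume A: "mono_op A \<and> (\<forall>x u. mono_related A x u \<longrightarrow> u \<in> A x)"
  have "S = A" if "mono_op S" and sub: "\<forall>x. A x \<subseteq> S x" for S
  proof (intro ext equalityI)
    fix x show "S x \<subseteq> A x"
      using A that unfolding mono_op_def mono_related_def by blast
  qed (use sub in blast)
  then show "max_mono_op A" using A by (simp add: max_mono_op_def)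
qed

lemma max_mono_op_relatedD: "max_mono_op A \<Longrightarrow> mono_related A x u \<Longrightarrow> u \<in> A x"
  by (simp add: max_mono_op_iff)

lemma max_mono_op_graph_nonempty:
  assumes "max_mono_op A" obtains y v where "v \<in> A y"
  using max_mono_op_relatedD[OF assms, of 0 0] unfolding mono_related_def by blast

lemma mono_op_perturb: "mono_op A \<Longrightarrow> mono_op (op_perturb A w)"
  unfolding mono_op_def op_perturb_def
  by (metis (no_types) diff_diff_eq2 diff_add_cancel)

lemma mono_op_scale:
  assumes "mono_op A" and "0 \<le> c" shows "mono_op (op_scale c A)"
  unfolding mono_op_def op_scale_def
proof (intro allI impI)
  fix x y u v assume "u \<in> (\<lambda>v. c *\<^sub>R v) ` A x" "v \<in> (\<lambda>v. c *\<^sub>R v) ` A y"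
  then obtain a b where "a \<in> A x" "b \<in> A y" "u = c *\<^sub>R a" "v = c *\<^sub>R b" by blast
  moreover have "inner (x - y) (c *\<^sub>R a - c *\<^sub>R b) = c * inner (x - y) (a - b)"
    by (simp add: inner_diff_right right_diff_distrib)
  ultimately show "0 \<le> inner (x - y) (u - v)"
    using assms unfolding mono_op_def by simp
qed

lemma mono_op_add:
  assumes "mono_op A" and "mono_op B" shows "mono_op (op_add A B)"
  unfolding mono_op_def
proof (intro allI impI)
  fix x y u v assume "u \<in> op_add A B x" "v \<in> op_add A B y"
  then obtain a b a' b' where "u = a + b" "a \<in> A x" "b \<in> B x" "v = a' + b'" "a' \<in> A y" "b' \<in> B y"
    unfolding op_add_def by blast
  moreover have "inner (x - y) (u - v) = inner (x - y) (a - a') + inner (x - y) (b - b')"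
    if "u = a + b" "v = a' + b'" for a b a' b'
    using that by (simp add: inner_diff_right inner_add_right)
  ultimately show "0 \<le> inner (x - y) (u - v)"
    using assms unfolding mono_op_def by (metis add_nonneg_nonneg)
qed

lemma max_mono_op_perturb:
  assumes "max_mono_op A" shows "max_mono_op (op_perturb A w)"
proof -
  have "mono_related A (x - w) u" if rel: "mono_related (op_perturb A w) x u" for x u
    unfolding mono_related_def
  proof (intro allI impI)
    fix y v assume "v \<in> A y"
    then have "0 \<le> inner (x - (y + w)) (u - v)"
      using rel by (simp add: mono_related_def op_perturb_def)
    then show "0 \<le> inner (x - w - y) (u - v)" by (simp add: algebra_simps)
  qed
  then show ?thesis
    using assms mono_op_perturb[of A w] by (simp add: max_mono_op_iff op_perturb_def)
qed

lemma max_mono_op_scale: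
  assumes "max_mono_op A" and "0 < c" shows "max_mono_op (op_scale c A)"
proof -
  have "u \<in> op_scale c A x" if rel: "mono_related (op_scale c A) x u" for x u
  proof -
    have "0 \<le> inner (x - y) ((1 / c) *\<^sub>R u - v)" if "v \<in> A y" for y v
    proof -
      have "0 \<le> inner (x - y) (u - c *\<^sub>R v)"
        using rel that unfolding mono_related_def op_scale_def by blast
      also have "\<dots> = c * inner (x - y) ((1 / c) *\<^sub>R u - v)"
        using \<open>0 < c\<close> by (simp add: inner_diff_right algebra_simps)
      finally show ?thesis using \<open>0 < c\<close> by (simp add: zero_le_mult_iff)
    qed
    then have "(1 / c) *\<^sub>R u \<in> A x"
      using assms(1) by (intro max_mono_op_relatedD) (auto simp: mono_related_def)
    moreover have "u = c *\<^sub>R ((1 / c) *\<^sub>R u)" using \<open>0 < c\<close> by simp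
    ultimately show ?thesis unfolding op_scale_def by blast
  qed
  then show ?thesis
    using assms by (simp add: max_mono_op_iff mono_op_scale)
qed

section \<open>Minty's theorem\<close>

text \<open>\<open>fitzpatrick_le A p r\<close> states that \<open>(p, r)\<close> lies in the epigraph of the Fitzpatrick function
  \<open>F\<^sub>A(x, u) = sup {\<langle>x, v\<rangle> + \<langle>y, u\<rangle> - \<langle>y, v\<rangle> | v \<in> A y}\<close>, which may be infinite.\<close>

definition fitzpatrick_le :: "('a::real_inner \<Rightarrow> 'a set) \<Rightarrow> 'a \<times> 'a \<Rightarrow> real \<Rightarrow> bool" where
  "fitzpatrick_le A p r \<longleftrightarrow>
     (\<forall>y v. v \<in> A y \<longrightarrow> inner (fst p) v + inner y (snd p) - inner y v \<le> r)"

lemma inner_diff_eq_fitzpatrick: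
  "inner (x - y) (u - v) = inner x u - (inner x v + inner y u - inner y v)"
  for x y u v :: "'a::real_inner"
  by (simp add: inner_diff_left inner_diff_right inner_commute)

lemma fitzpatrick_le_graph:
  assumes "mono_op A" and "u \<in> A x"
  shows "fitzpatrick_le A (x, u) (inner x u)"
  using assms unfolding fitzpatrick_le_def mono_op_def
  by (auto simp: inner_diff_eq_fitzpatrick)

lemma inner_le_fitzpatrick:
  assumes max: "max_mono_op A" and le: "fitzpatrick_le A (x, u) r"
  shows "inner x u \<le> r"
proof (rule ccontr)
  assume "\<not> inner x u \<le> r"
  have "mono_related A x u"
    unfolding mono_related_def inner_diff_eq_fitzpatrick
  proof (intro allI impI)
    fix y v assume "v \<in> A y"
    with le have "inner x v + inner y u - inner y v \<le> r" by (simp add: fitzpatrick_le_def)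
    with \<open>\<not> inner x u \<le> r\<close> show "0 \<le> inner x u - (inner x v + inner y u - inner y v)"
      by linarith
  qed
  with max have "u \<in> A x" by (rule max_mono_op_relatedD)
  from le[unfolded fitzpatrick_le_def, rule_format, OF this] have "inner x u \<le> r" by simp
  with \<open>\<not> inner x u \<le> r\<close> show False ..
qed

lemma fitzpatrick_le_convex:
  assumes "fitzpatrick_le A p r" and "fitzpatrick_le A p' r'" and "0 \<le> t" and "t \<le> 1"
  shows "fitzpatrick_le A ((1 - t) *\<^sub>R p + t *\<^sub>R p') ((1 - t) * r + t * r')"
  unfolding fitzpatrick_le_def
proof (intro allI impI)
  fix y v assume "v \<in> A y"
  then have "inner (fst p) v + inner y (snd p) - inner y v \<le> r"
    and "inner (fst p') v + inner y (snd p') - inner y v \<le> r'"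
    using assms(1,2) by (auto simp: fitzpatrick_le_def)
  then have "(1 - t) * (inner (fst p) v + inner y (snd p) - inner y v)
      + t * (inner (fst p') v + inner y (snd p') - inner y v) \<le> (1 - t) * r + t * r'"
    using assms(3,4) by (intro add_mono mult_left_mono) auto
  then show "inner (fst ((1 - t) *\<^sub>R p + t *\<^sub>R p')) v + inner y (snd ((1 - t) *\<^sub>R p + t *\<^sub>R p'))
      - inner y v \<le> (1 - t) * r + t * r'"
    by (simp add: inner_add_left inner_add_right algebra_simps)
qed

lemma fitzpatrick_le_limit:
  assumes "\<And>k. fitzpatrick_le A (P k) (R k)" and "P \<longlonglongrightarrow> p" and "R \<longlonglongrightarrow> r"
  shows "fitzpatrick_le A p r"
  unfolding fitzpatrick_le_def
proof (intro allI impI)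
  fix y v assume "v \<in> A y"
  have "(\<lambda>k. inner (fst (P k)) v + inner y (snd (P k)) - inner y v)
      \<longlonglongrightarrow> inner (fst p) v + inner y (snd p) - inner y v"
    using assms(2) by (intro tendsto_intros)
  moreover have "\<forall>k. inner (fst (P k)) v + inner y (snd (P k)) - inner y v \<le> R k"
    using assms(1) \<open>v \<in> A y\<close> by (simp add: fitzpatrick_le_def)
  ultimately show "inner (fst p) v + inner y (snd p) - inner y v \<le> r"
    using assms(3) by (meson LIMSEQ_le)
qed

lemma fitzpatrick_energy_nonneg:
  assumes "max_mono_op A" and "fitzpatrick_le A p r"
  shows "0 \<le> r + (norm p)\<^sup>2 / 2"
proof -
  obtain x u where p: "p = (x, u)" by fastforce
  have "0 \<le> (norm (x + u))\<^sup>2" by simp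
  also have "(norm (x + u))\<^sup>2 = (norm p)\<^sup>2 + 2 * inner x u"
    unfolding p power2_norm_eq_inner by (simp add: inner_add_left inner_add_right inner_commute)
  finally show ?thesis using inner_le_fitzpatrick[OF assms(1)] assms(2) p by fastforce
qed

lemma fitzpatrick_energy_min:
  fixes A :: "'a::{real_inner, complete_space} \<Rightarrow> 'a set"
  assumes max: "max_mono_op A"
  obtains p r where "fitzpatrick_le A p r"
    and "\<And>p' r'. fitzpatrick_le A p' r' \<Longrightarrow> r + (norm p)\<^sup>2 / 2 \<le> r' + (norm p')\<^sup>2 / 2"
proof -
  define S where "S = {z. fitzpatrick_le A (fst z) (snd z)}"
  define Q where "Q z = snd z + (norm (fst z))\<^sup>2 / 2" for z :: "('a \<times> 'a) \<times> real"
  define m where "m = Inf (Q ` S)"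
  obtain y v where "v \<in> A y" using max by (rule max_mono_op_graph_nonempty)
  moreover have "mono_op A" using max by (simp add: max_mono_op_def)
  ultimately have "((y, v), inner y v) \<in> S" by (simp add: S_def fitzpatrick_le_graph)
  then have ne: "S \<noteq> {}" by blast
  have bdd: "bdd_below (Q ` S)"
    using fitzpatrick_energy_nonneg[OF max] by (auto simp: Q_def S_def bdd_below_def)
  have m_le: "m \<le> Q z" if "z \<in> S" for z
    unfolding m_def using bdd that by (rule cINF_lower)
  obtain Z where Z_in: "\<And>k. Z k \<in> S" and Q_less: "\<And>k. Q (Z k) < m + inverse (real (Suc k))"
    and Q_lim: "(\<lambda>k. Q (Z k)) \<longlonglongrightarrow> m"
    using minimizing_seq_exists[OF ne bdd] unfolding m_def by blast
  define P where "P k = fst (Z k)" for k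
  have "(dist (P k) (P j))\<^sup>2 \<le> 4 * inverse (real (Suc k)) + 4 * inverse (real (Suc j))" for k j
  proof -
    have "(1 - 1/2) *\<^sub>R Z k + (1/2) *\<^sub>R Z j \<in> S"
      using Z_in[of k] Z_in[of j] fitzpatrick_le_convex[of A _ _ _ _ "1/2"] by (simp add: S_def)
    then have "m \<le> Q ((1 - 1/2) *\<^sub>R Z k + (1/2) *\<^sub>R Z j)" by (rule m_le)
    also have "\<dots> = Q (Z k) / 2 + Q (Z j) / 2 - (dist (P k) (P j))\<^sup>2 / 8"
      using norm_convex_comb_sq[of "1/2" "P k" "P j"]
      by (simp add: Q_def P_def dist_norm field_simps)
    finally show ?thesis using Q_less[of k] Q_less[of j] by linarith
  qed
  then have "Cauchy P"
    by (rule Cauchy_if_dist_sq_le[rotated]) (intro tendsto_mult_right_zero LIMSEQ_inverse_real_of_nat)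
  then obtain p where P: "P \<longlonglongrightarrow> p" using Cauchy_convergent_iff convergent_def by blast
  have "(\<lambda>k. snd (Z k)) \<longlonglongrightarrow> m - (norm p)\<^sup>2 / 2"
  proof -
    have "(\<lambda>k. Q (Z k) - (norm (P k))\<^sup>2 / 2) \<longlonglongrightarrow> m - (norm p)\<^sup>2 / 2"
      by (intro tendsto_intros Q_lim P) simp
    then show ?thesis by (simp add: Q_def P_def)
  qed
  with _ P have "fitzpatrick_le A p (m - (norm p)\<^sup>2 / 2)"
    by (rule fitzpatrick_le_limit) (use Z_in in \<open>simp add: S_def P_def\<close>)
  then show thesis
  proof (rule that)
    fix p' r' assume "fitzpatrick_le A p' r'"
    then have "m \<le> Q (p', r')" by (intro m_le) (simp add: S_def)
    then show "m - (norm p)\<^sup>2 / 2 + (norm p)\<^sup>2 / 2 \<le> r' + (norm p')\<^sup>2 / 2" by (simp add: Q_def)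
  qed
qed

lemma fitzpatrick_energy_min_variational:
  assumes max: "max_mono_op A" and fitz: "fitzpatrick_le A (x0, u0) r0"
    and min: "\<And>p' r'. fitzpatrick_le A p' r' \<Longrightarrow> r0 + (norm (x0, u0))\<^sup>2 / 2 \<le> r' + (norm p')\<^sup>2 / 2"
    and "v \<in> A y"
  shows "(norm (x0 + u0))\<^sup>2 \<le> inner ((- u0) - y) ((- x0) - v)"
proof -
  define p where "p = (x0, u0)"
  define g where "g = (y, v)"
  define a where "a = inner y v - r0 + ((norm g)\<^sup>2 - (norm p)\<^sup>2 - (norm (p - g))\<^sup>2) / 2"
  define b where "b = (norm (p - g))\<^sup>2 / 2"
  have "0 \<le> a + t * b" if t: "0 < t" "t < 1" for t
  proof -
    have "mono_op A" using max by (simp add: max_mono_op_def)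
    with fitz \<open>v \<in> A y\<close> t
    have "fitzpatrick_le A ((1 - t) *\<^sub>R p + t *\<^sub>R g) ((1 - t) * r0 + t * inner y v)"
      by (intro fitzpatrick_le_convex) (auto simp: p_def g_def fitzpatrick_le_graph)
    from min[OF this]
    have "r0 + (norm p)\<^sup>2 / 2 \<le> (1 - t) * r0 + t * inner y v + (norm ((1 - t) *\<^sub>R p + t *\<^sub>R g))\<^sup>2 / 2"
      by (simp add: p_def)
    also have "\<dots> = r0 + (norm p)\<^sup>2 / 2 + t * (a + t * b)"
      unfolding norm_convex_comb_sq a_def b_def by (simp add: field_simps)
    finally show ?thesis using t by (simp add: zero_le_mult_iff)
  qed
  then have "\<forall>\<^sub>F t in at_right 0. 0 \<le> a + t * b"
    unfolding eventually_at_right_field by (intro exI[of _ 1]) auto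
  moreover have "((\<lambda>t. a + t * b) \<longlongrightarrow> a) (at_right 0)"
    by (auto intro!: tendsto_eq_intros)
  ultimately have "0 \<le> a" by (intro tendsto_lowerbound) auto
  moreover have "inner x0 u0 \<le> r0" using inner_le_fitzpatrick[OF max fitz] .
  moreover have "(norm (c, d))\<^sup>2 = inner c c + inner d d" for c d :: 'a
    by (simp add: norm_Pair power2_norm_eq_inner)
  ultimately show ?thesis
    unfolding a_def p_def g_def power2_norm_eq_inner
    by (simp add: inner_diff_left inner_diff_right inner_add_left inner_add_right
        inner_commute algebra_simps) (simp add: field_simps)
qed

lemma max_mono_op_ex_neg_mem:
  fixes A :: "'a::{real_inner, complete_space} \<Rightarrow> 'a set"
  assumes max: "max_mono_op A"
  shows "\<exists>z. - z \<in> A z"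
proof -
  obtain p r0 where fitz: "fitzpatrick_le A p r0"
    and min: "\<And>p' r'. fitzpatrick_le A p' r' \<Longrightarrow> r0 + (norm p)\<^sup>2 / 2 \<le> r' + (norm p')\<^sup>2 / 2"
    using fitzpatrick_energy_min[OF max] by blast
  obtain x0 u0 where p: "p = (x0, u0)" by fastforce
  note var = fitzpatrick_energy_min_variational[OF max fitz[unfolded p] min[unfolded p]]
  have "- x0 \<in> A (- u0)"
    using max
  proof (rule max_mono_op_relatedD)
    show "mono_related A (- u0) (- x0)"
      unfolding mono_related_def using var by (meson order_trans zero_le_power2)
  qed
  with var[of "- x0" "- u0"] have "x0 = - u0" by (simp add: add_eq_0_iff)
  with \<open>- x0 \<in> A (- u0)\<close> show ?thesis by (intro exI[of _ "- u0"]) simp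
qed

theorem minty:
  fixes A :: "'a::{real_inner, complete_space} \<Rightarrow> 'a set"
  assumes "max_mono_op A"
  shows "\<exists>z. x - z \<in> A z"
proof -
  obtain z where "- z \<in> op_perturb A (- x) z"
    using max_mono_op_ex_neg_mem[OF max_mono_op_perturb[OF assms]] by blast
  then have "x - (z + x) \<in> A (z + x)" by (simp add: op_perturb_def)
  then show ?thesis ..
qed

section \<open>Resolvents\<close>

lemma resolvent_eqI:
  assumes "mono_op M" and "x - y \<in> M y"
  shows "resolvent M x = y"
  unfolding resolvent_def
proof (rule the_equality)
  show "x - y \<in> M y" by fact
  fix y' assume "x - y' \<in> M y'"
  with assms have "0 \<le> inner (y' - y) ((x - y') - (x - y))" unfolding mono_op_def by blast
  also have "\<dots> = - inner (y' - y) (y' - y)" by (simp add: inner_diff_right)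
  finally show "y' = y" by (simp add: inner_gt_zero_iff[symmetric] not_less[symmetric])
qed

lemma resolvent_mem:
  fixes M :: "'a::{real_inner, complete_space} \<Rightarrow> 'a set"
  assumes "max_mono_op M"
  shows "x - resolvent M x \<in> M (resolvent M x)"
proof -
  obtain y where y: "x - y \<in> M y" using minty[OF assms] by blast
  with assms have "resolvent M x = y" by (intro resolvent_eqI) (simp_all add: max_mono_op_def)
  with y show ?thesis by simp
qed

lemma resolvent_perturb:
  fixes M :: "'a::{real_inner, complete_space} \<Rightarrow> 'a set"
  assumes "max_mono_op M"
  shows "resolvent (op_perturb M w) x = resolvent M (x - w) + w"
proof (rule resolvent_eqI)
  show "mono_op (op_perturb M w)" using assms by (simp add: max_mono_op_def mono_op_perturb)
  show "x - (resolvent M (x - w) + w) \<in> op_perturb M w (resolvent M (x - w) + w)"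
    using resolvent_mem[OF assms, of "x - w"] by (simp add: op_perturb_def algebra_simps)
qed

definition firmly_nonexpansive :: "('a::real_inner \<Rightarrow> 'a) \<Rightarrow> bool" where
  "firmly_nonexpansive J \<longleftrightarrow> (\<forall>a b. (norm (J a - J b))\<^sup>2 \<le> inner (J a - J b) (a - b))"

lemma firmly_nonexpansive_resolvent:
  fixes M :: "'a::{real_inner, complete_space} \<Rightarrow> 'a set"
  assumes "max_mono_op M"
  shows "firmly_nonexpansive (resolvent M)"
  unfolding firmly_nonexpansive_def
proof (intro allI)
  fix a b
  let ?J = "resolvent M"
  have "0 \<le> inner (?J a - ?J b) ((a - ?J a) - (b - ?J b))"
    using assms resolvent_mem[OF assms] unfolding max_mono_op_def mono_op_def by blast
  also have "\<dots> = inner (?J a - ?J b) (a - b) - (norm (?J a - ?J b))\<^sup>2"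
    unfolding power2_norm_eq_inner by (simp add: inner_diff_right algebra_simps)
  finally show "(norm (?J a - ?J b))\<^sup>2 \<le> inner (?J a - ?J b) (a - b)" by simp
qed

lemma relaxed_reflection_norm_diff_sq:
  assumes "firmly_nonexpansive J" and "0 \<le> \<beta>"
  shows "(norm (((2 * \<beta>) *\<^sub>R J a - a) - ((2 * \<beta>) *\<^sub>R J b - b)))\<^sup>2
     \<le> (norm (a - b))\<^sup>2 - 4 * \<beta> * (1 - \<beta>) * (norm (J a - J b))\<^sup>2"
proof -
  have "((2 * \<beta>) *\<^sub>R J a - a) - ((2 * \<beta>) *\<^sub>R J b - b) = (2 * \<beta>) *\<^sub>R (J a - J b) - (a - b)"
    by (simp add: algebra_simps)
  then have "(norm (((2 * \<beta>) *\<^sub>R J a - a) - ((2 * \<beta>) *\<^sub>R J b - b)))\<^sup>2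
      = (norm (a - b))\<^sup>2 - 4 * \<beta> * inner (J a - J b) (a - b) + 4 * \<beta>\<^sup>2 * (norm (J a - J b))\<^sup>2"
    unfolding power2_norm_eq_inner
    by (simp add: inner_diff_left inner_diff_right inner_commute power2_eq_square algebra_simps)
  also have "\<dots> \<le> (norm (a - b))\<^sup>2 - 4 * \<beta> * (norm (J a - J b))\<^sup>2 + 4 * \<beta>\<^sup>2 * (norm (J a - J b))\<^sup>2"
    using assms unfolding firmly_nonexpansive_def by (simp add: mult_left_mono)
  also have "\<dots> = (norm (a - b))\<^sup>2 - 4 * \<beta> * (1 - \<beta>) * (norm (J a - J b))\<^sup>2"
    by (simp add: power2_eq_square algebra_simps)
  finally show ?thesis .
qed

section \<open>Asymptotic centres and Opial's lemma\<close>

text \<open>The library's \<open>limsup\<close> is \<open>ereal\<close>-valued; this real version is only meaningful for bounded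
  sequences.\<close>

definition limsup_real :: "(nat \<Rightarrow> real) \<Rightarrow> real" where
  "limsup_real s = Inf {a. \<forall>\<^sub>F n in sequentially. s n \<le> a}"

lemma Bseq_eventual_upper_bounds:
  fixes s :: "nat \<Rightarrow> real"
  assumes "Bseq s"
  shows "{a. \<forall>\<^sub>F n in sequentially. s n \<le> a} \<noteq> {}"
    and "bdd_below {a. \<forall>\<^sub>F n in sequentially. s n \<le> a}"
proof -
  obtain K where K: "\<And>n. \<bar>s n\<bar> \<le> K" using assms by (auto simp: Bseq_def)
  then show "{a. \<forall>\<^sub>F n in sequentially. s n \<le> a} \<noteq> {}"
    by (auto intro!: exI[of _ K] always_eventually simp: abs_le_iff)
  have "- K \<le> a" if "\<forall>\<^sub>F n in sequentially. s n \<le> a" for a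
  proof -
    from that obtain N where "\<forall>n\<ge>N. s n \<le> a" unfolding eventually_sequentially ..
    then have "s N \<le> a" by simp
    with K[of N] show ?thesis by (simp add: abs_le_iff)
  qed
  then show "bdd_below {a. \<forall>\<^sub>F n in sequentially. s n \<le> a}" unfolding bdd_below_def by blast
qed

lemma limsup_real_eventually_le:
  assumes "Bseq s" and "0 < e"
  shows "\<forall>\<^sub>F n in sequentially. s n \<le> limsup_real s + e"
proof -
  have "Inf {a. \<forall>\<^sub>F n in sequentially. s n \<le> a} < limsup_real s + e"
    using assms(2) by (simp add: limsup_real_def)
  then obtain a where "\<forall>\<^sub>F n in sequentially. s n \<le> a" and "a < limsup_real s + e"
    using cInf_lessD[OF Bseq_eventual_upper_bounds(1)[OF assms(1)]] by blast
  then show ?thesis by (auto elim: eventually_mono)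
qed

lemma limsup_real_le:
  assumes "Bseq s" and "\<And>e. 0 < e \<Longrightarrow> \<forall>\<^sub>F n in sequentially. s n \<le> b + e"
  shows "limsup_real s \<le> b"
proof (rule field_le_epsilon)
  fix e :: real assume "0 < e"
  with assms show "limsup_real s \<le> b + e"
    unfolding limsup_real_def by (intro cInf_lower Bseq_eventual_upper_bounds(2)) auto
qed

lemma limsup_real_nonneg:
  assumes "Bseq s" and "\<And>n. 0 \<le> s n"
  shows "0 \<le> limsup_real s"
  unfolding limsup_real_def
proof (rule cInf_greatest[OF Bseq_eventual_upper_bounds(1)[OF assms(1)]])
  fix a assume "a \<in> {a. \<forall>\<^sub>F n in sequentially. s n \<le> a}"
  then obtain N where "\<forall>n\<ge>N. s n \<le> a" unfolding eventually_sequentially by blast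
  with assms(2)[of N] show "0 \<le> a" by force
qed

lemma limsup_real_eq_lim:
  assumes lim: "s \<longlonglongrightarrow> L"
  shows "limsup_real s = L"
proof (rule antisym)
  have Bseq: "Bseq s" using lim by (intro convergent_imp_Bseq convergentI)
  show "limsup_real s \<le> L"
  proof (rule limsup_real_le[OF Bseq])
    fix e :: real assume "0 < e"
    with order_tendstoD(2)[OF lim, of "L + e"] show "\<forall>\<^sub>F n in sequentially. s n \<le> L + e"
      by (auto elim: eventually_mono)
  qed
  show "L \<le> limsup_real s"
  proof (rule ccontr)
    assume "\<not> L \<le> limsup_real s"
    then have e: "0 < (L - limsup_real s) / 2" by simp
    have "\<forall>\<^sub>F n in sequentially. s n \<le> limsup_real s + (L - limsup_real s) / 2"
      by (rule limsup_real_eventually_le[OF Bseq e])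
    moreover have "\<forall>\<^sub>F n in sequentially. L - (L - limsup_real s) / 2 < s n"
      using order_tendstoD(1)[OF lim] e by simp
    ultimately have "\<forall>\<^sub>F n in sequentially. False" by eventually_elim (simp add: field_simps)
    then show False by simp
  qed
qed

definition limsup_dist_sq :: "(nat \<Rightarrow> 'a::real_normed_vector) \<Rightarrow> 'a \<Rightarrow> real" where
  "limsup_dist_sq u z = limsup_real (\<lambda>n. (norm (u n - z))\<^sup>2)"

lemma Bseq_norm_diff_sq:
  assumes "Bseq u" shows "Bseq (\<lambda>n. (norm (u n - z))\<^sup>2)"
proof -
  obtain B where B: "\<And>n. norm (u n) \<le> B" using assms by (auto simp: Bseq_def)
  have "norm ((norm (u n - z))\<^sup>2) \<le> (B + norm z)\<^sup>2" for n
  proof -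
    have "norm (u n - z) \<le> B + norm z" using norm_triangle_ineq4[of "u n" z] B[of n] by linarith
    then show ?thesis by (simp add: power_mono)
  qed
  then show ?thesis by (rule BseqI')
qed

lemma limsup_dist_sq_nonneg: "Bseq u \<Longrightarrow> 0 \<le> limsup_dist_sq u z"
  unfolding limsup_dist_sq_def by (rule limsup_real_nonneg[OF Bseq_norm_diff_sq]) simp_all

lemma limsup_dist_sq_eq_lim: "(\<lambda>n. (norm (u n - z))\<^sup>2) \<longlonglongrightarrow> L \<Longrightarrow> limsup_dist_sq u z = L"
  unfolding limsup_dist_sq_def by (rule limsup_real_eq_lim)

lemma limsup_dist_sq_midpoint:
  fixes u :: "nat \<Rightarrow> 'a::real_inner"
  assumes "Bseq u"
  shows "limsup_dist_sq u ((1/2) *\<^sub>R (y + z))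
    \<le> limsup_dist_sq u y / 2 + limsup_dist_sq u z / 2 - (norm (y - z))\<^sup>2 / 4"
  unfolding limsup_dist_sq_def
proof (rule limsup_real_le[OF Bseq_norm_diff_sq[OF assms]])
  fix e :: real assume "0 < e"
  have mid: "(norm (u n - (1/2) *\<^sub>R (y + z)))\<^sup>2
      = (norm (u n - y))\<^sup>2 / 2 + (norm (u n - z))\<^sup>2 / 2 - (norm (y - z))\<^sup>2 / 4" for n
  proof -
    have "u n - (1/2) *\<^sub>R (y + z) = (1 - 1/2) *\<^sub>R (u n - y) + (1/2) *\<^sub>R (u n - z)"
      by (simp add: algebra_simps flip: scaleR_add_left)
    then show ?thesis
      using norm_convex_comb_sq[of "1/2" "u n - y" "u n - z"] by (simp add: norm_minus_commute)
  qed
  show "\<forall>\<^sub>F n in sequentially. (norm (u n - (1/2) *\<^sub>R (y + z)))\<^sup>2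
      \<le> limsup_real (\<lambda>n. (norm (u n - y))\<^sup>2) / 2 + limsup_real (\<lambda>n. (norm (u n - z))\<^sup>2) / 2
        - (norm (y - z))\<^sup>2 / 4 + e"
    using limsup_real_eventually_le[OF Bseq_norm_diff_sq[OF assms] \<open>0 < e\<close>, of y]
      limsup_real_eventually_le[OF Bseq_norm_diff_sq[OF assms] \<open>0 < e\<close>, of z]
    by eventually_elim (simp add: mid)
qed

lemma limsup_dist_sq_le_perturbed:
  fixes u :: "nat \<Rightarrow> 'a::real_normed_vector"
  assumes B: "\<And>n. norm (u n) \<le> B"
    and close: "\<forall>\<^sub>F n in sequentially. norm (u n - z) \<le> norm (u n - c) + d" and "0 \<le> d"
  shows "limsup_dist_sq u z \<le> limsup_dist_sq u c + d * (2 * (B + norm c) + d)"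
  unfolding limsup_dist_sq_def
proof (rule limsup_real_le)
  have Bseq: "Bseq u" using B by (rule BseqI')
  then show "Bseq (\<lambda>n. (norm (u n - z))\<^sup>2)" by (rule Bseq_norm_diff_sq)
  fix e :: real assume "0 < e"
  show "\<forall>\<^sub>F n in sequentially. (norm (u n - z))\<^sup>2
      \<le> limsup_real (\<lambda>n. (norm (u n - c))\<^sup>2) + d * (2 * (B + norm c) + d) + e"
    using close limsup_real_eventually_le[OF Bseq_norm_diff_sq[OF Bseq] \<open>0 < e\<close>, of c]
  proof eventually_elim
    case (elim n)
    have "norm (u n - c) \<le> B + norm c" using norm_triangle_ineq4[of "u n" c] B[of n] by linarith
    have "(norm (u n - z))\<^sup>2 \<le> (norm (u n - c) + d)\<^sup>2"
      using elim(1) by (simp add: power_mono)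
    also have "\<dots> = (norm (u n - c))\<^sup>2 + d * (2 * norm (u n - c) + d)"
      by (simp add: power2_eq_square algebra_simps)
    also have "\<dots> \<le> (norm (u n - c))\<^sup>2 + d * (2 * (B + norm c) + d)"
      using \<open>norm (u n - c) \<le> B + norm c\<close> \<open>0 \<le> d\<close> by (intro add_left_mono mult_left_mono) auto
    finally show ?case using elim(2) by linarith
  qed
qed

lemma limsup_dist_sq_tendsto:
  fixes u :: "nat \<Rightarrow> 'a::real_normed_vector"
  assumes "Bseq u" and Z: "Z \<longlonglongrightarrow> c"
  shows "(\<lambda>k. limsup_dist_sq u (Z k)) \<longlonglongrightarrow> limsup_dist_sq u c"
proof -
  obtain B where B: "\<And>n. norm (u n) \<le> B" using assms(1) by (auto simp: Bseq_def)
  obtain C where C: "\<And>k. norm (Z k) \<le> C" using convergent_imp_Bseq[OF convergentI[OF Z]] BseqE by blast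
  define d where "d k = norm (Z k - c)" for k
  define e where "e k = d k * (2 * (B + max C (norm c)) + d k)" for k
  have shift: "limsup_dist_sq u a \<le> limsup_dist_sq u b + e k"
    if "norm (a - b) = d k" and "norm b \<le> max C (norm c)" for a b k
  proof -
    have "\<forall>\<^sub>F n in sequentially. norm (u n - a) \<le> norm (u n - b) + d k"
      using norm_triangle_ineq[of "u n - b" "b - a" for n] that(1) by (simp add: norm_minus_commute)
    then have "limsup_dist_sq u a \<le> limsup_dist_sq u b + d k * (2 * (B + norm b) + d k)"
      by (rule limsup_dist_sq_le_perturbed[OF B]) (simp add: d_def)
    also have "\<dots> \<le> limsup_dist_sq u b + e k"
      using that(2) unfolding e_def by (intro add_left_mono mult_left_mono) (auto simp: d_def)
    finally show ?thesis .
  qed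
  have "d \<longlonglongrightarrow> 0" using tendsto_norm_zero[OF LIM_zero[OF Z]] by (simp add: d_def[abs_def])
  then have "e \<longlonglongrightarrow> 0 * (2 * (B + max C (norm c)) + 0)"
    unfolding e_def[abs_def] by (intro tendsto_mult tendsto_add tendsto_const)
  then have e: "e \<longlonglongrightarrow> 0" by simp
  show ?thesis
  proof (rule tendsto_sandwich)
    show "\<forall>\<^sub>F k in sequentially. limsup_dist_sq u c - e k \<le> limsup_dist_sq u (Z k)"
      using shift[of c "Z k" k for k] C
      by (intro always_eventually allI) (simp add: d_def norm_minus_commute le_max_iff_disj algebra_simps)
    show "\<forall>\<^sub>F k in sequentially. limsup_dist_sq u (Z k) \<le> limsup_dist_sq u c + e k"
      using shift[of "Z k" c k for k] by (intro always_eventually allI) (simp add: d_def)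
    show "(\<lambda>k. limsup_dist_sq u c - e k) \<longlonglongrightarrow> limsup_dist_sq u c"
      using tendsto_diff[OF tendsto_const e] by simp
    show "(\<lambda>k. limsup_dist_sq u c + e k) \<longlonglongrightarrow> limsup_dist_sq u c"
      using tendsto_add[OF tendsto_const e] by simp
  qed
qed

lemma asymptotic_center_exists:
  fixes u :: "nat \<Rightarrow> 'a::{real_inner, complete_space}"
  assumes "Bseq u"
  obtains c where "\<And>z. limsup_dist_sq u c \<le> limsup_dist_sq u z"
proof -
  define m where "m = Inf (range (limsup_dist_sq u))"
  have bdd: "bdd_below (range (limsup_dist_sq u))"
    using limsup_dist_sq_nonneg[OF assms] unfolding bdd_below_def by blast
  obtain Z where Z: "\<And>k. limsup_dist_sq u (Z k) < m + inverse (real (Suc k))"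
    and Z_lim: "(\<lambda>k. limsup_dist_sq u (Z k)) \<longlonglongrightarrow> m"
    using minimizing_seq_exists[of UNIV "limsup_dist_sq u"] bdd unfolding m_def by auto
  have "(dist (Z k) (Z j))\<^sup>2 \<le> 2 * inverse (real (Suc k)) + 2 * inverse (real (Suc j))" for k j
  proof -
    have "m \<le> limsup_dist_sq u ((1/2) *\<^sub>R (Z k + Z j))" unfolding m_def using bdd by (rule cINF_lower) simp
    also have "\<dots> \<le> limsup_dist_sq u (Z k) / 2 + limsup_dist_sq u (Z j) / 2 - (norm (Z k - Z j))\<^sup>2 / 4"
      by (rule limsup_dist_sq_midpoint[OF assms])
    finally show ?thesis using Z[of k] Z[of j] by (simp add: dist_norm)
  qed
  then have "Cauchy Z"
    by (rule Cauchy_if_dist_sq_le[rotated]) (intro tendsto_mult_right_zero LIMSEQ_inverse_real_of_nat)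
  then obtain c where "Z \<longlonglongrightarrow> c" using Cauchy_convergent_iff convergent_def by blast
  with assms have "(\<lambda>k. limsup_dist_sq u (Z k)) \<longlonglongrightarrow> limsup_dist_sq u c" by (rule limsup_dist_sq_tendsto)
  with Z_lim have "limsup_dist_sq u c = m" by (rule LIMSEQ_unique[symmetric])
  then show thesis using bdd by (intro that[of c]) (simp add: m_def cINF_lower)
qed

lemma asymptotic_center_fixed:
  fixes u :: "nat \<Rightarrow> 'a::real_inner"
  assumes ne: "\<And>a b. norm (T a - T b) \<le> norm (a - b)" and "Bseq u"
    and reg: "(\<lambda>n. u n - T (u n)) \<longlonglongrightarrow> 0"
    and center: "\<And>z. limsup_dist_sq u c \<le> limsup_dist_sq u z"
  shows "T c = c"
proof -
  obtain B where B: "\<And>n. norm (u n) \<le> B" using assms(2) by (auto simp: Bseq_def)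
  have Tc_le: "limsup_dist_sq u (T c) \<le> limsup_dist_sq u c + d * (2 * (B + norm c) + d)"
    if "0 < d" for d
  proof (rule limsup_dist_sq_le_perturbed[OF B])
    have "\<forall>\<^sub>F n in sequentially. norm (u n - T (u n)) < d"
      using reg \<open>0 < d\<close> by (simp add: tendsto_iff dist_norm)
    then show "\<forall>\<^sub>F n in sequentially. norm (u n - T c) \<le> norm (u n - c) + d"
    proof eventually_elim
      case (elim n)
      have "norm (u n - T c) \<le> norm (T (u n) - T c) + norm (u n - T (u n))"
        using norm_triangle_ineq[of "T (u n) - T c" "u n - T (u n)"] by simp
      with ne[of "u n" c] elim show ?case by linarith
    qed
  qed (use that in simp)
  have "limsup_dist_sq u (T c) \<le> limsup_dist_sq u c"
  proof (rule tendsto_le[of "at_right 0"])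
    show "((\<lambda>d. limsup_dist_sq u c + d * (2 * (B + norm c) + d)) \<longlongrightarrow> limsup_dist_sq u c) (at_right 0)"
      by (auto intro!: tendsto_eq_intros)
    show "\<forall>\<^sub>F d in at_right 0. limsup_dist_sq u (T c) \<le> limsup_dist_sq u c + d * (2 * (B + norm c) + d)"
      using Tc_le by (auto simp: eventually_at_right_field intro: exI[of _ 1])
  qed auto
  moreover have "limsup_dist_sq u c \<le> limsup_dist_sq u ((1/2) *\<^sub>R (c + T c))" by (rule center)
  moreover have "limsup_dist_sq u ((1/2) *\<^sub>R (c + T c))
      \<le> limsup_dist_sq u c / 2 + limsup_dist_sq u (T c) / 2 - (norm (c - T c))\<^sup>2 / 4"
    by (rule limsup_dist_sq_midpoint[OF assms(2)])
  ultimately have "(norm (c - T c))\<^sup>2 \<le> 0" by linarith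
  then show ?thesis by simp
qed

lemma subseq_tendsto_nonzero:
  fixes s :: "nat \<Rightarrow> real"
  assumes "Bseq s" and "\<not> s \<longlonglongrightarrow> 0"
  obtains r \<delta> where "strict_mono r" and "(s \<circ> r) \<longlonglongrightarrow> \<delta>" and "\<delta> \<noteq> 0"
proof -
  obtain e where "0 < e" and not_ev: "\<not> (\<forall>\<^sub>F n in sequentially. \<bar>s n\<bar> < e)"
    using assms(2) by (auto simp: tendsto_iff dist_real_def)
  from not_eventually_sequentiallyD[OF not_ev] obtain r1 :: "nat \<Rightarrow> nat"
    where r1: "strict_mono r1" and "\<forall>k. \<not> \<bar>s (r1 k)\<bar> < e" by blast
  then have far: "e \<le> \<bar>s (r1 k)\<bar>" for k by (simp add: not_less)
  have "bounded (range (s \<circ> r1))"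
    using assms(1) unfolding Bseq_eq_bounded by (rule bounded_subset) auto
  then obtain \<delta> r2 where r2: "strict_mono r2" and lim: "(s \<circ> r1 \<circ> r2) \<longlonglongrightarrow> \<delta>"
    using bounded_imp_convergent_subsequence by blast
  have "e \<le> \<bar>\<delta>\<bar>"
    using tendsto_rabs[OF lim] far by (intro LIMSEQ_le_const) auto
  with \<open>0 < e\<close> have "\<delta> \<noteq> 0" by auto
  with r1 r2 lim show thesis by (intro that[of "r1 \<circ> r2" \<delta>]) (auto intro: strict_mono_o simp: o_assoc)
qed

lemma limsup_dist_sq_subseq:
  assumes "convergent (\<lambda>n. norm (x n - f))" and "strict_mono r"
  shows "limsup_dist_sq (x \<circ> r) f = limsup_dist_sq x f"
proof -
  obtain l where "(\<lambda>n. norm (x n - f)) \<longlonglongrightarrow> l" using assms(1) by (auto simp: convergent_def)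
  then have lim: "(\<lambda>n. (norm (x n - f))\<^sup>2) \<longlonglongrightarrow> l\<^sup>2" by (intro tendsto_intros)
  have "limsup_dist_sq (x \<circ> r) f = l\<^sup>2"
    using LIMSEQ_subseq_LIMSEQ[OF lim assms(2)] by (intro limsup_dist_sq_eq_lim) (simp add: o_def)
  also have "\<dots> = limsup_dist_sq x f" using lim by (rule limsup_dist_sq_eq_lim[symmetric])
  finally show ?thesis .
qed

lemma limsup_dist_sq_translate:
  fixes u :: "nat \<Rightarrow> 'a::real_inner"
  assumes "(\<lambda>k. (norm (u k - c))\<^sup>2) \<longlonglongrightarrow> L" and "(\<lambda>k. inner (u k - c) y) \<longlonglongrightarrow> \<delta>"
  shows "limsup_dist_sq u (c + t *\<^sub>R y) = L - 2 * t * \<delta> + t\<^sup>2 * (norm y)\<^sup>2"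
proof (rule limsup_dist_sq_eq_lim)
  have "(norm (u k - (c + t *\<^sub>R y)))\<^sup>2 = (norm (u k - c))\<^sup>2 - 2 * t * inner (u k - c) y + t\<^sup>2 * (norm y)\<^sup>2"
    for k
    unfolding power2_norm_eq_inner
    by (simp add: inner_diff_left inner_diff_right inner_add_right inner_commute power2_eq_square
        algebra_simps)
  then show "(\<lambda>k. (norm (u k - (c + t *\<^sub>R y)))\<^sup>2) \<longlonglongrightarrow> L - 2 * t * \<delta> + t\<^sup>2 * (norm y)\<^sup>2"
    using assms by (simp add: tendsto_intros)
qed

text \<open>Along fixed points the distances converge, so a subsequence has the same
  \<open>limsup_dist_sq\<close> there as the whole sequence; this transfers minimality of \<open>c\<close>.\<close>

lemma asymptotic_center_subseq:
  fixes x :: "nat \<Rightarrow> 'a::{real_inner, complete_space}"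
  assumes ne: "\<And>a b. norm (T a - T b) \<le> norm (a - b)" and bdd: "Bseq x"
    and fejer: "\<And>f. T f = f \<Longrightarrow> convergent (\<lambda>n. norm (x n - f))"
    and reg: "(\<lambda>n. x n - T (x n)) \<longlonglongrightarrow> 0"
    and center: "\<And>z. limsup_dist_sq x c \<le> limsup_dist_sq x z"
    and r: "strict_mono r"
  shows "limsup_dist_sq (x \<circ> r) c \<le> limsup_dist_sq (x \<circ> r) z"
proof -
  have u_bdd: "Bseq (x \<circ> r)"
    using bdd unfolding Bseq_eq_bounded by (rule bounded_subset) auto
  obtain c' where c': "\<And>z. limsup_dist_sq (x \<circ> r) c' \<le> limsup_dist_sq (x \<circ> r) z"
    using asymptotic_center_exists[OF u_bdd] by blast
  have "(\<lambda>k. (x \<circ> r) k - T ((x \<circ> r) k)) \<longlonglongrightarrow> 0"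
    using LIMSEQ_subseq_LIMSEQ[OF reg r] by (simp add: o_def)
  with ne u_bdd have "T c' = c'" using c' by (rule asymptotic_center_fixed)
  have "T c = c" using ne bdd reg center by (rule asymptotic_center_fixed)
  have "limsup_dist_sq (x \<circ> r) c = limsup_dist_sq x c"
    using fejer[OF \<open>T c = c\<close>] r by (rule limsup_dist_sq_subseq)
  also have "\<dots> \<le> limsup_dist_sq x c'" by (rule center)
  also have "\<dots> = limsup_dist_sq (x \<circ> r) c'"
    using fejer[OF \<open>T c' = c'\<close>] r by (rule limsup_dist_sq_subseq[symmetric])
  also have "\<dots> \<le> limsup_dist_sq (x \<circ> r) z" by (rule c')
  finally show ?thesis .
qed

lemma Bseq_inner_diff:
  fixes x :: "nat \<Rightarrow> 'a::real_inner"
  assumes "Bseq x" shows "Bseq (\<lambda>n. inner (x n - c) y)"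
proof -
  obtain B where B: "\<And>n. norm (x n) \<le> B" using assms by (auto simp: Bseq_def)
  have "norm (inner (x n - c) y) \<le> (B + norm c) * norm y" for n
  proof -
    have "norm (inner (x n - c) y) \<le> norm (x n - c) * norm y" by (simp add: Cauchy_Schwarz_ineq2)
    also have "\<dots> \<le> (B + norm c) * norm y"
      using norm_triangle_ineq4[of "x n" c] B[of n] by (intro mult_right_mono) auto
    finally show ?thesis .
  qed
  then show ?thesis by (rule BseqI')
qed

text \<open>Opial's lemma, proved without weak compactness: if \<open>\<langle>x\<^sub>n - c, y\<rangle>\<close> does not tend to 0 for the
  asymptotic centre \<open>c\<close>, then along a subsequence it tends to some \<open>\<delta> \<noteq> 0\<close>, and moving \<open>c\<close> by
  \<open>(\<delta> / \<parallel>y\<parallel>\<^sup>2) y\<close> lowers \<open>limsup_dist_sq\<close> of that subsequence, of which \<open>c\<close> is still a centre.\<close>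

theorem weak_conv_if_fejer_asymptotically_regular:
  fixes x :: "nat \<Rightarrow> 'a::{real_inner, complete_space}"
  assumes ne: "\<And>a b. norm (T a - T b) \<le> norm (a - b)" and bdd: "Bseq x"
    and fejer: "\<And>f. T f = f \<Longrightarrow> convergent (\<lambda>n. norm (x n - f))"
    and reg: "(\<lambda>n. x n - T (x n)) \<longlonglongrightarrow> 0"
  obtains c where "T c = c" and "weak_conv x c"
proof -
  obtain c where center: "\<And>z. limsup_dist_sq x c \<le> limsup_dist_sq x z"
    using asymptotic_center_exists[OF bdd] by blast
  have Tc: "T c = c" using ne bdd reg center by (rule asymptotic_center_fixed)
  have "(\<lambda>n. inner (x n) y) \<longlonglongrightarrow> inner c y" for y
  proof (rule ccontr)
    assume not_lim: "\<not> (\<lambda>n. inner (x n) y) \<longlonglongrightarrow> inner c y"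
    define s where "s n = inner (x n - c) y" for n
    have "\<not> s \<longlonglongrightarrow> 0"
    proof
      assume "s \<longlonglongrightarrow> 0"
      then have "(\<lambda>n. s n + inner c y) \<longlonglongrightarrow> 0 + inner c y" by (intro tendsto_add tendsto_const)
      with not_lim show False by (simp add: s_def inner_diff_left)
    qed
    with Bseq_inner_diff[OF bdd] obtain r \<delta> where r: "strict_mono r" and s_lim: "(s \<circ> r) \<longlonglongrightarrow> \<delta>"
      and "\<delta> \<noteq> 0"
      unfolding s_def[abs_def] by (rule subseq_tendsto_nonzero)
    then have "y \<noteq> 0" by (auto simp: s_def o_def LIMSEQ_const_iff)
    obtain l where l: "(\<lambda>n. norm (x n - c)) \<longlonglongrightarrow> l" using fejer[OF Tc] by (auto simp: convergent_def)
    then have u_c: "(\<lambda>k. (norm ((x \<circ> r) k - c))\<^sup>2) \<longlonglongrightarrow> l\<^sup>2"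
      using LIMSEQ_subseq_LIMSEQ[OF tendsto_power[OF l] r] by (simp add: o_def)
    define t where "t = \<delta> / (norm y)\<^sup>2"
    have "limsup_dist_sq (x \<circ> r) (c + t *\<^sub>R y) = l\<^sup>2 - 2 * t * \<delta> + t\<^sup>2 * (norm y)\<^sup>2"
      using u_c s_lim by (intro limsup_dist_sq_translate) (simp_all add: s_def o_def)
    also have "\<dots> = l\<^sup>2 - \<delta>\<^sup>2 / (norm y)\<^sup>2"
      using \<open>y \<noteq> 0\<close> by (simp add: t_def power2_eq_square field_simps)
    also have "\<dots> < limsup_dist_sq (x \<circ> r) c"
      using \<open>y \<noteq> 0\<close> \<open>\<delta> \<noteq> 0\<close> limsup_dist_sq_eq_lim[OF u_c] by (simp add: o_def)
    finally show False
      using asymptotic_center_subseq[OF ne bdd fejer reg center r, of "c + t *\<^sub>R y"] by simp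
  qed
  with Tc show thesis by (intro that) (auto simp: weak_conv_def)
qed

section \<open>Krasnosel'skii--Mann iteration\<close>

locale krasnoselskii_mann =
  fixes T :: "'a::real_inner \<Rightarrow> 'a" and lam :: "nat \<Rightarrow> real" and x :: "nat \<Rightarrow> 'a"
  assumes nonexpansive: "\<And>a b. norm (T a - T b) \<le> norm (a - b)"
    and lam_nonneg: "\<And>n. 0 \<le> lam n" and lam_le_1: "\<And>n. lam n \<le> 1"
    and iterate: "\<And>n. x (Suc n) = (1 - lam n) *\<^sub>R x n + lam n *\<^sub>R T (x n)"
begin

lemma step_eq: "x (Suc n) - x n = lam n *\<^sub>R (T (x n) - x n)"
  by (simp add: iterate algebra_simps)

lemma dist_fixed_point_Suc_sq:
  assumes "T f = f"
  shows "(norm (x (Suc n) - f))\<^sup>2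
    \<le> (norm (x n - f))\<^sup>2 - lam n * (1 - lam n) * (norm (x n - T (x n)))\<^sup>2"
proof -
  have "x (Suc n) - f = (1 - lam n) *\<^sub>R (x n - f) + lam n *\<^sub>R (T (x n) - f)"
    by (simp add: iterate algebra_simps)
  then have "(norm (x (Suc n) - f))\<^sup>2 = (1 - lam n) * (norm (x n - f))\<^sup>2
      + lam n * (norm (T (x n) - f))\<^sup>2 - lam n * (1 - lam n) * (norm (x n - T (x n)))\<^sup>2"
    by (simp add: norm_convex_comb_sq)
  also have "lam n * (norm (T (x n) - f))\<^sup>2 \<le> lam n * (norm (x n - f))\<^sup>2"
    using nonexpansive[of "x n" f] assms lam_nonneg[of n] by (simp add: mult_left_mono power_mono)
  finally show ?thesis by (simp add: algebra_simps)
qed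

lemma dist_fixed_point_decseq:
  assumes "T f = f" shows "decseq (\<lambda>n. norm (x n - f))"
proof (rule decseq_SucI)
  fix n
  have "0 \<le> lam n * (1 - lam n) * (norm (x n - T (x n)))\<^sup>2"
    using lam_nonneg[of n] lam_le_1[of n] by simp
  with dist_fixed_point_Suc_sq[OF assms, of n] have "(norm (x (Suc n) - f))\<^sup>2 \<le> (norm (x n - f))\<^sup>2"
    by linarith
  then show "norm (x (Suc n) - f) \<le> norm (x n - f)" by (rule power2_le_imp_le) simp
qed

lemma dist_fixed_point_le: "T f = f \<Longrightarrow> norm (x n - f) \<le> norm (x 0 - f)"
  using dist_fixed_point_decseq by (auto dest: decseqD)

lemma dist_fixed_point_convergent: "T f = f \<Longrightarrow> convergent (\<lambda>n. norm (x n - f))"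
  by (rule decseq_convergent[OF dist_fixed_point_decseq, of f 0]) (auto intro: convergentI)

lemma Bseq_iterates:
  assumes "T f = f" shows "Bseq x"
proof (rule BseqI')
  fix n
  show "norm (x n) \<le> norm (x 0 - f) + norm f"
    using norm_triangle_sub[of "x n" f] dist_fixed_point_le[OF assms, of n] by linarith
qed

lemma residual_decseq: "decseq (\<lambda>n. norm (x n - T (x n)))"
proof (rule decseq_SucI)
  fix n
  have "T (x (Suc n)) - x (Suc n) = (T (x (Suc n)) - T (x n)) + (1 - lam n) *\<^sub>R (T (x n) - x n)"
    by (simp add: iterate algebra_simps)
  then have "norm (T (x (Suc n)) - x (Suc n))
      \<le> norm (T (x (Suc n)) - T (x n)) + norm ((1 - lam n) *\<^sub>R (T (x n) - x n))"
    by (metis norm_triangle_ineq)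
  also have "\<dots> \<le> norm (x (Suc n) - x n) + (1 - lam n) * norm (T (x n) - x n)"
    using nonexpansive[of "x (Suc n)" "x n"] lam_le_1[of n] by simp
  also have "\<dots> = norm (T (x n) - x n)"
    using lam_nonneg[of n] by (simp add: step_eq left_diff_distrib)
  finally show "norm (x (Suc n) - T (x (Suc n))) \<le> norm (x n - T (x n))"
    by (simp add: norm_minus_commute)
qed

text \<open>The telescoped Fejer inequality bounds \<open>\<Sum> lam n (1 - lam n) \<parallel>x n - T (x n)\<parallel>\<^sup>2\<close>, while the
  residuals decrease; a positive limit of the residuals would make \<open>\<Sum> lam n (1 - lam n)\<close> finite.\<close>

lemma residual_tendsto_zero:
  assumes "T f = f" and diverge: "\<not> summable (\<lambda>n. lam n * (1 - lam n))"
  shows "(\<lambda>n. x n - T (x n)) \<longlonglongrightarrow> 0"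
proof -
  define D where "D n = norm (x n - T (x n))" for n
  obtain L where L: "D \<longlonglongrightarrow> L" and L_le: "\<forall>n. L \<le> D n"
    using decseq_convergent[OF residual_decseq, of 0] unfolding D_def by auto
  have "0 \<le> L" using L by (rule LIMSEQ_le_const) (auto simp: D_def)
  have telescope: "(\<Sum>i<n. lam i * (1 - lam i) * (D i)\<^sup>2) \<le> (norm (x 0 - f))\<^sup>2 - (norm (x n - f))\<^sup>2" for n
  proof (induction n)
    case (Suc n)
    then show ?case using dist_fixed_point_Suc_sq[OF assms(1), of n] by (simp add: D_def)
  qed simp
  have weights_nonneg: "0 \<le> lam n * (1 - lam n)" for n
    using lam_nonneg[of n] lam_le_1[of n] by simp
  have "summable (\<lambda>n. lam n * (1 - lam n) * (D n)\<^sup>2)"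
  proof (rule summableI_nonneg_bounded)
    show "(\<Sum>i<n. lam i * (1 - lam i) * (D i)\<^sup>2) \<le> (norm (x 0 - f))\<^sup>2" for n
      using telescope[of n] by (smt (verit) zero_le_power2)
  qed (simp add: weights_nonneg)
  moreover have "norm (L\<^sup>2 * (lam n * (1 - lam n))) \<le> lam n * (1 - lam n) * (D n)\<^sup>2" for n
  proof -
    have "L\<^sup>2 \<le> (D n)\<^sup>2" using L_le \<open>0 \<le> L\<close> by (simp add: power_mono)
    from mult_left_mono[OF this weights_nonneg[of n]]
      abs_of_nonneg[OF mult_nonneg_nonneg[OF zero_le_power2 weights_nonneg[of n]], of L]
    show ?thesis by (simp add: mult.commute)
  qed
  ultimately have "summable (\<lambda>n. L\<^sup>2 * (lam n * (1 - lam n)))"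
    by (rule summable_comparison_test')
  with diverge have "L = 0" by simp
  with L show ?thesis by (simp add: D_def[abs_def] tendsto_norm_zero_iff)
qed

lemma step_tendsto_zero:
  assumes "T f = f" and "\<not> summable (\<lambda>n. lam n * (1 - lam n))"
  shows "(\<lambda>n. x (Suc n) - x n) \<longlonglongrightarrow> 0"
proof (rule Lim_null_comparison)
  show "\<forall>\<^sub>F n in sequentially. norm (x (Suc n) - x n) \<le> norm (x n - T (x n))"
    using lam_nonneg lam_le_1
    by (auto simp: step_eq norm_minus_commute intro!: always_eventually mult_left_le_one_le)
  show "(\<lambda>n. norm (x n - T (x n))) \<longlonglongrightarrow> 0"
    using residual_tendsto_zero[OF assms] by (simp add: tendsto_norm_zero_iff)
qed

end

section \<open>The relaxed Douglas--Rachford operator\<close>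

locale relaxed_douglas_rachford =
  fixes A B :: "'a::{real_inner, complete_space} \<Rightarrow> 'a set" and \<gamma> \<beta> :: real and q :: 'a
  assumes max_A: "max_mono_op A" and max_B: "max_mono_op B"
    and \<gamma>_pos: "0 < \<gamma>" and \<beta>_pos: "0 < \<beta>" and \<beta>_less_1: "\<beta> < 1"
begin

definition JA :: "'a \<Rightarrow> 'a" where
  "JA = resolvent (op_scale \<gamma> (op_perturb A (- q)))"

definition JB :: "'a \<Rightarrow> 'a" where
  "JB = resolvent (op_scale \<gamma> (op_perturb B (- q)))"

definition T :: "'a \<Rightarrow> 'a" where
  "T y = (2 * \<beta>) *\<^sub>R JB ((2 * \<beta>) *\<^sub>R JA y - y) - ((2 * \<beta>) *\<^sub>R JA y - y)"

lemma max_mono_op_scale_perturb: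
  "max_mono_op M \<Longrightarrow> max_mono_op (op_scale \<gamma> (op_perturb M (- q)))"
  using \<gamma>_pos by (intro max_mono_op_scale max_mono_op_perturb)

lemma T_norm_diff_sq:
  "(norm (T a - T b))\<^sup>2 \<le> (norm (a - b))\<^sup>2 - 4 * \<beta> * (1 - \<beta>) * (norm (JA a - JA b))\<^sup>2"
proof -
  let ?RA = "\<lambda>y. (2 * \<beta>) *\<^sub>R JA y - y"
  have firm: "firmly_nonexpansive JA" "firmly_nonexpansive JB"
    unfolding JA_def JB_def using max_A max_B
    by (simp_all add: firmly_nonexpansive_resolvent max_mono_op_scale_perturb)
  have "0 \<le> \<beta>" using \<beta>_pos by simp
  note reflect_A = relaxed_reflection_norm_diff_sq[OF firm(1) this]
    and reflect_B = relaxed_reflection_norm_diff_sq[OF firm(2) this]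
  have "0 \<le> 4 * \<beta> * (1 - \<beta>) * (norm (JB (?RA a) - JB (?RA b)))\<^sup>2"
    using \<beta>_pos \<beta>_less_1 by simp
  then have "(norm (T a - T b))\<^sup>2 \<le> (norm (?RA a - ?RA b))\<^sup>2"
    using reflect_B[where a = "?RA a" and b = "?RA b"] unfolding T_def by linarith
  also have "\<dots> \<le> (norm (a - b))\<^sup>2 - 4 * \<beta> * (1 - \<beta>) * (norm (JA a - JA b))\<^sup>2"
    by (rule reflect_A)
  finally show ?thesis .
qed

lemma T_nonexpansive: "norm (T a - T b) \<le> norm (a - b)"
proof (rule power2_le_imp_le)
  have "0 \<le> 4 * \<beta> * (1 - \<beta>) * (norm (JA a - JA b))\<^sup>2" using \<beta>_pos \<beta>_less_1 by simp
  with T_norm_diff_sq[of a b] show "(norm (T a - T b))\<^sup>2 \<le> (norm (a - b))\<^sup>2" by linarith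
qed simp

lemma JA_fixed_points_eq:
  assumes "T f = f" and "T g = g"
  shows "JA f = JA g"
proof -
  have "4 * \<beta> * (1 - \<beta>) * (norm (JA f - JA g))\<^sup>2 \<le> 0"
    using T_norm_diff_sq[of f g] assms by simp
  with \<beta>_pos \<beta>_less_1 show ?thesis by (simp add: mult_le_0_iff)
qed

text \<open>If \<open>q - p = (\<gamma> / (2 (1 - \<beta>))) (a + b)\<close> with \<open>a \<in> A p\<close> and \<open>b \<in> B p\<close>, then
  \<open>p - q + \<gamma> a\<close> is fixed by \<open>T\<close>: its \<open>A\<close>-resolvent step lands at \<open>p - q\<close>, and the reflected point
  differs from \<open>p - q\<close> by exactly \<open>\<gamma> b\<close>.\<close>

lemma fixed_point_exists:
  assumes "q \<in> ran_id_plus (op_scale (\<gamma> / (2 * (1 - \<beta>))) (op_add A B))"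
  obtains f where "T f = f"
    and "JA f = resolvent (op_scale (\<gamma> / (2 * (1 - \<beta>))) (op_add A B)) q - q"
proof -
  define \<kappa> where "\<kappa> = \<gamma> / (2 * (1 - \<beta>))"
  obtain p a b where q_p: "q - p = \<kappa> *\<^sub>R (a + b)" and a: "a \<in> A p" and b: "b \<in> B p"
    using assms unfolding ran_id_plus_def op_scale_def op_add_def \<kappa>_def by force
  have "0 < \<kappa>" using \<gamma>_pos \<beta>_less_1 by (simp add: \<kappa>_def)
  have mono_A: "mono_op A" and mono_B: "mono_op B" using max_A max_B by (simp_all add: max_mono_op_def)
  have "resolvent (op_scale \<kappa> (op_add A B)) q = p"
    using mono_A mono_B \<open>0 < \<kappa>\<close> a b q_p
    by (intro resolvent_eqI mono_op_scale mono_op_add) (auto simp: op_scale_def op_add_def)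
  define f where "f = p - q + \<gamma> *\<^sub>R a"
  have mono_JA: "mono_op (op_scale \<gamma> (op_perturb A (- q)))"
    and mono_JB: "mono_op (op_scale \<gamma> (op_perturb B (- q)))"
    using mono_A mono_B \<gamma>_pos by (simp_all add: mono_op_scale mono_op_perturb)
  have JA_f: "JA f = p - q"
    unfolding JA_def
    by (rule resolvent_eqI[OF mono_JA]) (use a in \<open>auto simp: f_def op_scale_def op_perturb_def\<close>)
  have "2 * (1 - \<beta>) * \<kappa> = \<gamma>" using \<beta>_less_1 by (simp add: \<kappa>_def)
  have "(2 * \<beta>) *\<^sub>R JA f - f - (p - q) = (2 * (1 - \<beta>)) *\<^sub>R (q - p) - \<gamma> *\<^sub>R a"
    unfolding JA_f by (simp add: f_def algebra_simps scaleR_2)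
  also have "\<dots> = \<gamma> *\<^sub>R (a + b) - \<gamma> *\<^sub>R a"
    unfolding q_p scaleR_scaleR mult.assoc[symmetric] \<open>2 * (1 - \<beta>) * \<kappa> = \<gamma>\<close> ..
  also have "\<dots> = \<gamma> *\<^sub>R b" by (simp add: algebra_simps)
  finally have "JB ((2 * \<beta>) *\<^sub>R JA f - f) = p - q"
    unfolding JB_def
    by (intro resolvent_eqI[OF mono_JB]) (use b in \<open>auto simp: op_scale_def op_perturb_def\<close>)
  then have "T f = f" by (simp add: T_def JA_f)
  with JA_f show thesis using \<open>resolvent (op_scale \<kappa> (op_add A B)) q = p\<close>
    by (intro that) (simp_all add: \<kappa>_def)
qed

lemma resolvent_scale_shift: "resolvent (op_scale \<gamma> A) (q + y) = JA y + q"
proof -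
  have "op_scale \<gamma> (op_perturb A (- q)) = op_perturb (op_scale \<gamma> A) (- q)"
    by (simp add: op_scale_def op_perturb_def)
  then show ?thesis
    using resolvent_perturb[OF max_mono_op_scale[OF max_A \<gamma>_pos], of "- q" y]
    by (simp add: JA_def add.commute)
qed

lemma JA_tendsto:
  assumes fixed: "T f = f" and bound: "\<And>n. norm (x n - f) \<le> R"
    and reg: "(\<lambda>n. x n - T (x n)) \<longlonglongrightarrow> 0"
  shows "(\<lambda>n. JA (x n)) \<longlonglongrightarrow> JA f"
proof -
  define \<kappa> where "\<kappa> = 4 * \<beta> * (1 - \<beta>)"
  have "0 < \<kappa>" using \<beta>_pos \<beta>_less_1 by (simp add: \<kappa>_def)
  have "\<kappa> * (norm (JA (x n) - JA f))\<^sup>2 \<le> norm (x n - T (x n)) * (2 * R)" for n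
  proof -
    have T_le: "norm (T (x n) - f) \<le> norm (x n - f)"
      using T_nonexpansive[of "x n" f] fixed by simp
    have "\<kappa> * (norm (JA (x n) - JA f))\<^sup>2 \<le> (norm (x n - f))\<^sup>2 - (norm (T (x n) - f))\<^sup>2"
      using T_norm_diff_sq[of "x n" f] unfolding fixed \<kappa>_def by linarith
    also have "\<dots> \<le> norm ((x n - f) - (T (x n) - f)) * (norm (x n - f) + norm (T (x n) - f))"
      by (rule power2_norm_diff_le)
    also have "\<dots> = norm (x n - T (x n)) * (norm (x n - f) + norm (T (x n) - f))" by simp
    also have "\<dots> \<le> norm (x n - T (x n)) * (2 * R)"
      using T_le bound[of n] by (intro mult_left_mono) auto
    finally show ?thesis .
  qed
  then have JA_le: "norm (JA (x n) - JA f) \<le> sqrt (2 * R / \<kappa> * norm (x n - T (x n)))" for n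
    using \<open>0 < \<kappa>\<close> by (intro real_le_rsqrt) (simp add: pos_le_divide_eq ac_simps)
  have lim: "(\<lambda>n. sqrt (2 * R / \<kappa> * norm (x n - T (x n)))) \<longlonglongrightarrow> 0"
    using tendsto_real_sqrt[OF tendsto_mult_right_zero[OF tendsto_norm_zero[OF reg]], of "2 * R / \<kappa>"]
    by simp
  have "(\<lambda>n. JA (x n) - JA f) \<longlonglongrightarrow> 0"
    using Lim_null_comparison[OF always_eventually[OF allI[OF JA_le]] lim] .
  then show ?thesis by (simp add: LIM_zero_iff)
qed

end

theorem theorem3p5:
  fixes A B :: "'a::{real_inner, complete_space} \<Rightarrow> 'a set"
    and \<gamma> \<beta> :: real and lam :: "nat \<Rightarrow> real" and q :: 'a and x :: "nat \<Rightarrow> 'a"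
  assumes "max_mono_op A" and "max_mono_op B"
    and "\<gamma> > 0"
    and "\<And>n. 0 \<le> lam n \<and> lam n \<le> 1"
    and "\<not> summable (\<lambda>n. lam n * (1 - lam n))"
    and "0 < \<beta>" and "\<beta> < 1"
    and "q \<in> ran_id_plus (op_scale (\<gamma> / (2 * (1 - \<beta>))) (op_add A B))"
    and "\<And>n. x (Suc n) = (1 - lam n) *\<^sub>R x n + lam n *\<^sub>R
            ((\<lambda>y. (2 * \<beta>) *\<^sub>R resolvent (op_scale \<gamma> (op_perturb B (- q))) y - y)
              ((\<lambda>y. (2 * \<beta>) *\<^sub>R resolvent (op_scale \<gamma> (op_perturb A (- q))) y - y) (x n)))"
  shows "\<exists>xs. xs = (\<lambda>y. (2 * \<beta>) *\<^sub>R resolvent (op_scale \<gamma> (op_perturb B (- q))) y - y)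
                    ((\<lambda>y. (2 * \<beta>) *\<^sub>R resolvent (op_scale \<gamma> (op_perturb A (- q))) y - y) xs)
          \<and> (\<lambda>n. x (Suc n) - x n) \<longlonglongrightarrow> 0
          \<and> weak_conv x xs
          \<and> resolvent (op_scale \<gamma> A) (q + xs)
              = resolvent (op_scale (\<gamma> / (2 * (1 - \<beta>))) (op_add A B)) q
          \<and> (\<lambda>n. resolvent (op_scale \<gamma> A) (q + x n))
              \<longlonglongrightarrow> resolvent (op_scale (\<gamma> / (2 * (1 - \<beta>))) (op_add A B)) q"
proof -
  interpret relaxed_douglas_rachford A B \<gamma> \<beta> q
    using assms(1-3,6,7) by unfold_locales
  interpret km: krasnoselskii_mann T lam x
    using T_nonexpansive assms(4,9) by unfold_locales (auto simp: T_def JA_def JB_def)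
  define P where "P = resolvent (op_scale (\<gamma> / (2 * (1 - \<beta>))) (op_add A B)) q"
  obtain f where f: "T f = f" "JA f = P - q"
    using fixed_point_exists[OF assms(8)] unfolding P_def by blast
  have reg: "(\<lambda>n. x n - T (x n)) \<longlonglongrightarrow> 0" by (rule km.residual_tendsto_zero[OF f(1) assms(5)])
  obtain c where c: "T c = c" "weak_conv x c"
    using weak_conv_if_fejer_asymptotically_regular[OF T_nonexpansive km.Bseq_iterates[OF f(1)]
        km.dist_fixed_point_convergent reg] .
  have "resolvent (op_scale \<gamma> A) (q + c) = P"
    using JA_fixed_points_eq[OF c(1) f(1)] f(2) by (simp add: resolvent_scale_shift)
  moreover have "(\<lambda>n. resolvent (op_scale \<gamma> A) (q + x n)) \<longlonglongrightarrow> P"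
    using tendsto_add_const_iff[of q, THEN iffD2, OF JA_tendsto[OF f(1) km.dist_fixed_point_le[OF f(1)] reg]]
    by (simp add: resolvent_scale_shift f(2) add.commute)
  ultimately show ?thesis
    using c km.step_tendsto_zero[OF f(1) assms(5)] unfolding P_def
    by (intro exI[of _ c]) (simp add: T_def JA_def JB_def)
qed

end
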